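(* Let $n\ge 1$ and $d$ be positive integers, and define $a_1=d$ and $a_k=d\big(1+\sum_{j=1}^{k-1}a_j\big)$ for every integer $k\in\{2,\dots,n\}$. Let $\mathbf{z}=(z_0,z_1,\dots,z_n)\in\mathbb{R}\times[0,d]^n$. Then every integer vector $\mathbf{x}=(x_0,\dots,x_n)\in\mathbb{Z}\times([0,d]\cap\mathbb{Z})^n$ with $\mathbf{x}\le_L\mathbf{z}$ satisfies the linear inequalities $$x_i+\sum_{j=0}^{i-1}a_{i-j}\,(x_j-\lceil z_j\rceil)\le \lfloor z_i\rfloor\qquad\text{for all } i\in\{0,\dots,n\},$$ where for $i=0$ the sum is empty (equal to $0$).
   Context: For $\mathbf{x},\mathbf{y}\in\mathbb{R}^{n+1}$, $\mathbf{x}=(x_0,\dots,x_n)$ is lexicographically lower than $\mathbf{y}=(y_0,\dots,y_n)$, written $\mathbf{x}<_L\mathbf{y}$, if there is $k\in\{0,\dots,n\}$ with $x_k<y_k$ and $x_i=y_i$ for all $i<k$; $\mathbf{x}\le_L\mathbf{y}$ means $\mathbf{x}<_L\mathbf{y}$ or $\mathbf{x}=\mathbf{y}$. *)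

theory Defs
  imports Complex_Main
begin

text \<open>The sequence a_1 = d, a_k = d (1 + sum_{j=1}^{k-1} a_j). Index 0 is unused (set to 0).\<close>
fun seq_a :: "int \<Rightarrow> nat \<Rightarrow> int" where
  "seq_a d 0 = 0"
| "seq_a d (Suc k) = d * (1 + (\<Sum>j\<in>{1..k}. seq_a d j))"

text \<open>Lexicographic order on vectors (x_0,...,x_n) in R^(n+1), represented as functions nat => real
  of which only the indices 0..n are relevant.\<close>
definition lex_less :: "nat \<Rightarrow> (nat \<Rightarrow> real) \<Rightarrow> (nat \<Rightarrow> real) \<Rightarrow> bool" where
  "lex_less n x y \<longleftrightarrow> (\<exists>k\<le>n. x k < y k \<and> (\<forall>i<k. x i = y i))"

definition lex_le :: "nat \<Rightarrow> (nat \<Rightarrow> real) \<Rightarrow> (nat \<Rightarrow> real) \<Rightarrow> bool" where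
  "lex_le n x y \<longleftrightarrow> lex_less n x y \<or> (\<forall>i\<le>n. x i = y i)"

end

theory Submission
  imports Defs
begin

text \<open>Let k be the first index with x k < z k. Before k every weighted term vanishes,
  so up to index k the inequality reduces to x i \<le> \<lfloor>z i\<rfloor>. For i > k the term at k is at
  most -a(i-k), and the later terms are at most d a(i-j) each; since
  a(i-k) = d (1 + \<Sum>k<j<i. a(i-j)), the weighted sum is at most -d, so the left-hand side is
  at most x i - d \<le> 0 \<le> \<lfloor>z i\<rfloor>.\<close>

lemma seq_a_nonneg:
  assumes "d \<ge> 0"
  shows "seq_a d k \<ge> 0"
proof (induction k rule: less_induct)
  case (less k)
  show ?case
  proof (cases k)
    case (Suc p)
    have "(\<Sum>j\<in>{1..p}. seq_a d j) \<ge> 0"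
      using less Suc by (intro sum_nonneg) auto
    then show ?thesis using Suc assms by simp
  qed simp
qed

lemma seq_a_eq_tail_sum:
  assumes "k < i"
  shows "seq_a d (i - k) = d * (1 + (\<Sum>j\<in>{Suc k..<i}. seq_a d (i - j)))"
proof -
  have "(\<Sum>j\<in>{Suc k..<i}. seq_a d (i - j)) = (\<Sum>t\<in>{1..i - k - 1}. seq_a d t)"
    by (rule sum.reindex_bij_witness[of _ "\<lambda>t. i - t" "\<lambda>j. i - j"]) auto
  moreover have "i - k = Suc (i - k - 1)"
    using assms by simp
  ultimately show ?thesis
    by (metis seq_a.simps(2))
qed

lemma weighted_gap_sum_eq_0:
  assumes "\<forall>j<i. real_of_int (x j) = z j"
  shows "(\<Sum>j<i. c j * (x j - \<lceil>z j\<rceil>)) = (0 :: int)"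
  using assms by (intro sum.neutral) (metis ceiling_of_int diff_self lessThan_iff mult_zero_right)

lemma weighted_gap_sum_le_before_drop:
  assumes "\<forall>j<i. real_of_int (x j) = z j" and "real_of_int (x i) \<le> z i"
  shows "x i + (\<Sum>j<i. c j * (x j - \<lceil>z j\<rceil>)) \<le> \<lfloor>z i\<rfloor>"
  using assms weighted_gap_sum_eq_0[OF assms(1)] by (simp add: le_floor_iff)

lemma weighted_gap_sum_le_after_drop:
  assumes "d \<ge> 0" and "k < i"
    and agree: "\<forall>j<k. real_of_int (x j) = z j"
    and drop: "real_of_int (x k) < z k"
    and later: "\<forall>j\<in>{Suc k..<i}. 0 \<le> z j \<and> x j \<le> d"
  shows "(\<Sum>j<i. seq_a d (i - j) * (x j - \<lceil>z j\<rceil>)) \<le> - d"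
proof -
  let ?t = "\<lambda>j. seq_a d (i - j) * (x j - \<lceil>z j\<rceil>)"
  have split: "(\<Sum>j<i. ?t j) = (\<Sum>j<k. ?t j) + ?t k + (\<Sum>j\<in>{Suc k..<i}. ?t j)"
  proof -
    have "(\<Sum>j<i. ?t j) = (\<Sum>j<k. ?t j) + (\<Sum>j\<in>{k..<i}. ?t j)"
      using \<open>k < i\<close> sum.atLeastLessThan_concat[of 0 k i ?t] by (simp add: atLeast0LessThan)
    then show ?thesis
      using \<open>k < i\<close> by (simp add: sum.atLeast_Suc_lessThan)
  qed
  have "x k < \<lceil>z k\<rceil>"
    using drop by (simp add: less_ceiling_iff)
  then have "?t k \<le> - seq_a d (i - k)"
    using mult_left_mono[of "x k - \<lceil>z k\<rceil>" "-1"] seq_a_nonneg[OF \<open>d \<ge> 0\<close>] by simp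
  moreover have "(\<Sum>j\<in>{Suc k..<i}. ?t j) \<le> (\<Sum>j\<in>{Suc k..<i}. seq_a d (i - j) * d)"
  proof (rule sum_mono)
    fix j assume "j \<in> {Suc k..<i}"
    then have "x j - \<lceil>z j\<rceil> \<le> d"
      using later by (metis ceiling_mono ceiling_zero diff_le_eq le_add_same_cancel1 order_trans)
    then show "?t j \<le> seq_a d (i - j) * d"
      using seq_a_nonneg[OF \<open>d \<ge> 0\<close>] by (simp add: mult_left_mono)
  qed
  moreover have "(\<Sum>j\<in>{Suc k..<i}. seq_a d (i - j) * d) = seq_a d (i - k) - d"
    using seq_a_eq_tail_sum[OF \<open>k < i\<close>, of d] by (simp add: sum_distrib_left algebra_simps)
  ultimately show ?thesis
    using split weighted_gap_sum_eq_0[OF agree, of "\<lambda>j. seq_a d (i - j)"] by linarith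
qed

theorem proposition3:
  fixes n :: nat and d :: int and z :: "nat \<Rightarrow> real" and x :: "nat \<Rightarrow> int"
  assumes "n \<ge> 1" and "d \<ge> 1"
    and "\<forall>i\<in>{1..n}. 0 \<le> z i \<and> z i \<le> real_of_int d"
    and "\<forall>i\<in>{1..n}. 0 \<le> x i \<and> x i \<le> d"
    and "lex_le n (\<lambda>i. real_of_int (x i)) z"
  shows "\<forall>i\<le>n. x i + (\<Sum>j<i. seq_a d (i - j) * (x j - \<lceil>z j\<rceil>)) \<le> \<lfloor>z i\<rfloor>"
proof (intro allI impI)
  fix i assume "i \<le> n"
  consider "\<forall>j\<le>n. real_of_int (x j) = z j"
    | k where "k \<le> n" "real_of_int (x k) < z k" "\<forall>j<k. real_of_int (x j) = z j"
    using assms(5) unfolding lex_le_def lex_less_def by auto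
  then show "x i + (\<Sum>j<i. seq_a d (i - j) * (x j - \<lceil>z j\<rceil>)) \<le> \<lfloor>z i\<rfloor>"
  proof cases
    case 1
    then show ?thesis
      using \<open>i \<le> n\<close> by (intro weighted_gap_sum_le_before_drop) auto
  next
    case (2 k)
    show ?thesis
    proof (cases "i \<le> k")
      case True
      then show ?thesis
        using 2 by (intro weighted_gap_sum_le_before_drop) (auto simp: le_less)
    next
      case False
      have "(\<Sum>j<i. seq_a d (i - j) * (x j - \<lceil>z j\<rceil>)) \<le> - d"
        using 2 False \<open>i \<le> n\<close> assms(2-4)
        by (intro weighted_gap_sum_le_after_drop) auto
      moreover have "x i \<le> d" "0 \<le> \<lfloor>z i\<rfloor>"
        using False \<open>i \<le> n\<close> assms(3,4) by auto
      ultimately show ?thesis by linarith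
    qed
  qed
qed

end
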